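(* Let $n\geq 1$, $g\geq 1$, $r\geq 1$. Let $C_1,\dots,C_n\subset GL_r(\mathbb{C})$ be conjugacy classes whose collection of eigenvalues is multiplicatively generic and such that $\prod_{i=1}^n\det(C_i)=1$. If $g=1$, assume moreover that at least one of the partitions $P^i$ attached to $C_i$ is not the one-part partition $(r)$. Then there exist $A_k,B_k\in GL_r(\mathbb{C})$ ($k=1,\dots,g$) and $T_i\in C_i$ ($i=1,\dots,n$) such that $$\prod_{k=1}^g (A_k,B_k)\prod_{i=1}^n T_i=\mathrm{Id}_r,\qquad (A_k,B_k):=A_kB_kA_k^{-1}B_k^{-1},$$ and the matrices $A_1,\dots,A_g,B_1,\dots,B_g,T_1,\dots,T_n$ have no common invariant subspace other than $0$ and $\mathbb{C}^r$.
   Context: Partitions: a partition $P=(m_1\geq\dots\geq m_\ell>0)$ of $r$ has conjugate $\widehat P=(n_1,\dots,n_{m_1})$, $n_j=\#\{k:m_k\ge j\}$; the union $P\cup Q$ collects all parts of $P$ and $Q$ in non-increasing order. Partition attached to a conjugacy class $C\subset GL_r(\mathbb{C})$ with distinct eigenvalues $\lambda_1,\dots,\lambda_e$: let $P^{\lambda_j}$ record the sizes of the Jordan blocks of eigenvalue $\lambda_j$; set $P:=\widehat{P}^{\lambda_1}\cup\dots\cup\widehat{P}^{\lambda_e}$. Write $P^i$ for the partition attached to $C_i$. Multiplicative genericity: list the eigenvalues of $C_i$ with multiplicity as $\lambda_{i,1},\dots,\lambda_{i,r}$; the collection is multiplicatively generic if for every $1\le m<r$ and all subsets $\Lambda_1,\dots,\Lambda_n\subset\{1,\dots,r\}$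 of size $m$, $\prod_{i}\prod_{k\in\Lambda_i}\lambda_{i,k}\neq1$. *)

theory Defs
  imports "Jordan_Normal_Form.Jordan_Normal_Form"
begin

definition mat_prod_list :: "nat \<Rightarrow> complex mat list \<Rightarrow> complex mat" where
  "mat_prod_list r Ms = foldr (\<lambda>M acc. M * acc) Ms (1\<^sub>m r)"

definition inv_mat :: "nat \<Rightarrow> complex mat \<Rightarrow> complex mat" where
  "inv_mat r A = (SOME B. B \<in> carrier_mat r r \<and> A * B = 1\<^sub>m r \<and> B * A = 1\<^sub>m r)"

definition commutator :: "nat \<Rightarrow> complex mat \<Rightarrow> complex mat \<Rightarrow> complex mat" where
  "commutator r A B = A * B * inv_mat r A * inv_mat r B"

definition GL :: "nat \<Rightarrow> complex mat set" where
  "GL r = {A \<in> carrier_mat r r. invertible_mat A}"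

definition conj_class :: "nat \<Rightarrow> complex mat \<Rightarrow> complex mat set" where
  "conj_class r M = {T \<in> GL r. similar_mat T M}"

definition eig_list :: "complex mat \<Rightarrow> complex list" where
  "eig_list A = (SOME xs. char_poly A = (\<Prod>a\<leftarrow>xs. [:- a, 1:]))"

(* Multiplicative genericity of the eigenvalues of C_1..C_n (classes of M 0 .. M (n-1)) *)
definition mult_generic :: "nat \<Rightarrow> nat \<Rightarrow> (nat \<Rightarrow> complex mat) \<Rightarrow> bool" where
  "mult_generic r n M \<longleftrightarrow>
     (\<forall>m. 1 \<le> m \<and> m < r \<longrightarrow>
       (\<forall>\<Lambda> :: nat \<Rightarrow> nat set.
          (\<forall>i<n. \<Lambda> i \<subseteq> {0..<r} \<and> card (\<Lambda> i) = m) \<longrightarrow>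
          (\<Prod>i<n. \<Prod>k\<in>\<Lambda> i. eig_list (M i) ! k) \<noteq> 1))"

definition jordan_blocks :: "complex mat \<Rightarrow> (nat \<times> complex) list" where
  "jordan_blocks A = (SOME n_as. jordan_nf A n_as)"

definition block_partition :: "complex mat \<Rightarrow> complex \<Rightarrow> nat multiset" where
  "block_partition A c = mset (map fst (filter (\<lambda>p. snd p = c) (jordan_blocks A)))"

definition conj_partition :: "nat multiset \<Rightarrow> nat multiset" where
  "conj_partition P =
     mset (map (\<lambda>j. size (filter_mset (\<lambda>k. j \<le> k) P)) [1..<Max (insert 0 (set_mset P)) + 1])"

definition attached_partition :: "complex mat \<Rightarrow> nat multiset" where
  "attached_partition A =
     (\<Sum>c\<in>snd ` set (jordan_blocks A). conj_partition (block_partition A c))"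

definition is_subspace :: "nat \<Rightarrow> complex vec set \<Rightarrow> bool" where
  "is_subspace r W \<longleftrightarrow> W \<subseteq> carrier_vec r \<and> 0\<^sub>v r \<in> W \<and>
     (\<forall>v\<in>W. \<forall>w\<in>W. v + w \<in> W) \<and> (\<forall>c. \<forall>v\<in>W. c \<cdot>\<^sub>v v \<in> W)"

definition common_invariant :: "complex mat set \<Rightarrow> complex vec set \<Rightarrow> bool" where
  "common_invariant S W \<longleftrightarrow> (\<forall>X\<in>S. \<forall>w\<in>W. X *\<^sub>v w \<in> W)"

end

theory Submission
  imports
    Defs
    "HOL-Combinatorics.List_Permutation"
    "Jordan_Normal_Form.Jordan_Normal_Form_Existence"
    "Jordan_Normal_Form.Schur_Decomposition"
begin

(* Conjugate each class to an upper triangular T_i whose diagonal lists its eigenvalues in a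
   fixed order; then X = T_1 ... T_n is upper triangular with diagonal entries
   d_j = prod_i lambda_(i,j).  The partial products b_j = d_0 ... d_(j-1) satisfy
   b_r = b_0 = 1 by the determinant condition, and genericity, applied to the index sets
   {j, ..., k-1}, makes b_0, ..., b_(r-1) pairwise distinct.  Hence, with D = diag(b_0, ..., b_(r-1)),
   the matrix X D is upper triangular with the distinct diagonal b_1, ..., b_(r-1), b_0, so
   X D = P D P^-1 for an invertible P, i.e. (D,P) X = 1; the other g - 1 commutators are trivial.
   A subspace invariant under D is spanned by coordinate vectors, and P e_j is an eigenvector of
   X D whose last nonzero coordinate is j - 1 (mod r); so D and P alone act irreducibly. *)

section \<open>Diagonal matrices and diagonalization\<close>

lemma mat_diag_index [simp]:
  "i < n \<Longrightarrow> j < n \<Longrightarrow> mat_diag n f $$ (i, j) = (if i = j then f i else 0)"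
  by (simp add: mat_diag_def)

lemma mat_diag_dims [simp]: "dim_row (mat_diag n f) = n" "dim_col (mat_diag n f) = n"
  by (simp_all add: mat_diag_def)

lemma index_mult_mat_sum:
  assumes "A \<in> carrier_mat n m" and "B \<in> carrier_mat m k" and "i < n" and "j < k"
  shows "(A * B) $$ (i, j) = (\<Sum>l<m. A $$ (i, l) * B $$ (l, j))"
  using assms by (auto simp: scalar_prod_def atLeast0LessThan intro!: sum.cong)

lemma index_mult_mat_vec_sum:
  assumes "A \<in> carrier_mat n m" and "v \<in> carrier_vec m" and "i < n"
  shows "(A *\<^sub>v v) $ i = (\<Sum>l<m. A $$ (i, l) * v $ l)"
  using assms by (auto simp: scalar_prod_def atLeast0LessThan intro!: sum.cong)

lemma mat_diag_mult_vec_index: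
  fixes f :: "nat \<Rightarrow> 'a :: comm_ring_1"
  assumes "v \<in> carrier_vec n" and "i < n"
  shows "(mat_diag n f *\<^sub>v v) $ i = f i * v $ i"
proof -
  have "(mat_diag n f *\<^sub>v v) $ i = (\<Sum>k<n. mat_diag n f $$ (i, k) * v $ k)"
    using assms by (intro index_mult_mat_vec_sum) auto
  also have "\<dots> = (\<Sum>k<n. if k = i then f i * v $ i else 0)"
    using assms(2) by (intro sum.cong) auto
  finally show ?thesis
    using assms(2) by simp
qed

lemma mat_diag_mult_inverse:
  fixes f :: "nat \<Rightarrow> 'a :: field"
  assumes "\<forall>i<n. f i \<noteq> 0"
  shows "mat_diag n f * mat_diag n (\<lambda>i. inverse (f i)) = 1\<^sub>m n"
  using assms by (intro eq_matI) auto

lemma similar_mat_diag_permute: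
  fixes f :: "nat \<Rightarrow> 'a :: field"
  assumes p: "bij_betw p {..<n} {..<n}"
  shows "similar_mat (mat_diag n (\<lambda>i. f (p i))) (mat_diag n f)"
proof -
  define P :: "'a mat" where "P = mat n n (\<lambda>(i, j). if j = p i then 1 else 0)"
  define Q :: "'a mat" where "Q = mat n n (\<lambda>(i, j). if i = p j then 1 else 0)"
  have p_lt: "i < n \<Longrightarrow> p i < n" for i
    using p by (auto dest: bij_betwE)
  have p_eq: "i < n \<Longrightarrow> j < n \<Longrightarrow> p i = p j \<longleftrightarrow> i = j" for i j
    using p by (auto simp: bij_betw_def inj_on_def)
  have P: "P \<in> carrier_mat n n" and Q: "Q \<in> carrier_mat n n"
    by (simp_all add: P_def Q_def)
  have PQ: "P * Q = 1\<^sub>m n"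
  proof (rule eq_matI)
    fix i l assume "i < dim_row (1\<^sub>m n :: 'a mat)" "l < dim_col (1\<^sub>m n :: 'a mat)"
    then have i: "i < n" and l: "l < n" by simp_all
    have "(P * Q) $$ (i, l) = (\<Sum>j<n. P $$ (i, j) * Q $$ (j, l))"
      using P Q i l by (rule index_mult_mat_sum)
    also have "\<dots> = (\<Sum>j<n. if j = p i then (if p l = p i then 1 else 0) else 0)"
      using i l by (intro sum.cong) (auto simp: P_def Q_def)
    also have "\<dots> = 1\<^sub>m n $$ (i, l)"
      using i l p_lt[OF i] p_eq[OF l i] by simp
    finally show "(P * Q) $$ (i, l) = 1\<^sub>m n $$ (i, l)" .
  qed (simp_all add: P_def Q_def)
  have "mat_diag n (\<lambda>i. f (p i)) = P * mat_diag n f * Q"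
  proof (rule eq_matI)
    fix i l assume "i < dim_row (P * mat_diag n f * Q)" "l < dim_col (P * mat_diag n f * Q)"
    then have i: "i < n" and l: "l < n" by (simp_all add: P_def Q_def)
    have "(P * mat_diag n f * Q) $$ (i, l) = (\<Sum>k<n. (P * mat_diag n f) $$ (i, k) * Q $$ (k, l))"
      using P Q i l by (intro index_mult_mat_sum) auto
    also have "\<dots> = (\<Sum>k<n. P $$ (i, k) * f k * Q $$ (k, l))"
      using i by (intro sum.cong) (simp_all add: mat_diag_mult_right[OF P])
    also have "\<dots> = (\<Sum>k<n. if k = p i then (if p l = p i then f (p i) else 0) else 0)"
      using i l by (intro sum.cong) (auto simp: P_def Q_def)
    also have "\<dots> = mat_diag n (\<lambda>i. f (p i)) $$ (i, l)"
      using i l p_lt[OF i] p_eq[OF l i] by simp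
    finally show "mat_diag n (\<lambda>i. f (p i)) $$ (i, l) = (P * mat_diag n f * Q) $$ (i, l)" ..
  qed (simp_all add: P_def Q_def)
  with P Q PQ mat_mult_left_right_inverse[OF P Q PQ] show ?thesis
    by (intro similar_matI[of _ _ P Q n]) auto
qed

lemma order_prod_linear_factors:
  "order a (\<Prod>x\<leftarrow>xs. [:- x, 1:]) = count (mset xs) (a :: 'a :: idom)"
proof (induct xs)
  case (Cons x xs)
  have nz: "(\<Prod>x\<leftarrow>xs. [:- x, 1:]) \<noteq> 0"
    by auto
  have "order a (\<Prod>x\<leftarrow>x # xs. [:- x, 1:]) = order a [:- x, 1:] + order a (\<Prod>x\<leftarrow>xs. [:- x, 1:])"
    unfolding list.map prod_list.Cons by (rule order_mult, unfold mult_eq_0_iff) (use nz in auto)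
  also have "order a [:- x, 1:] = (if x = a then 1 else 0)"
    using order_linear_power[of a "- x" 1] by auto
  finally show ?case
    using Cons by simp
qed simp

lemma jordan_matrix_all_ones:
  "jordan_matrix (map (\<lambda>a. (1, a)) cs) = mat_diag (length cs) (\<lambda>i. cs ! i)"
proof (induct cs)
  case Nil
  show ?case by (rule eq_matI) (auto simp: jordan_matrix_def)
next
  case (Cons c cs)
  have "sum_list (map fst (map (\<lambda>a. (1 :: nat, a)) cs)) = length cs"
    by (induct cs) auto
  then show ?case
    unfolding list.map(2) jordan_matrix_Cons Cons
    by (intro eq_matI) (auto simp: jordan_block_def nth_Cons')
qed

lemma jordan_nf_distinct_diag:
  fixes U :: "complex mat"
  assumes U: "U \<in> carrier_mat n n" and ut: "upper_triangular U"
    and dist: "distinct (diag_mat U)" and jnf: "jordan_nf U n_as"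
  shows "n_as = map (\<lambda>a. (1, a)) (map snd n_as)" and "mset (map snd n_as) = mset (diag_mat U)"
proof -
  have mult: "sum_list (map fst (filter (\<lambda>na. snd na = a) n_as)) = count (mset (diag_mat U)) a" for a
    using jordan_nf_order[OF jnf, of a]
    unfolding char_poly_upper_triangular[OF U ut] order_prod_linear_factors ..
  have ones: "fst x = 1" if "x \<in> set n_as" for x
  proof -
    obtain k a where x: "x = (k, a)" by force
    have "k \<noteq> 0"
      using jnf that x unfolding jordan_nf_def by force
    moreover have "k \<le> sum_list (map fst (filter (\<lambda>na. snd na = a) n_as))"
      using that x by (intro member_le_sum_list) (auto intro!: image_eqI[of _ fst "(k, a)"])
    moreover have "count (mset (diag_mat U)) a \<le> 1"
      using dist by (simp add: distinct_count_atmost_1)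
    ultimately show ?thesis
      using x mult[of a] by simp
  qed
  then show n_as: "n_as = map (\<lambda>a. (1, a)) (map snd n_as)"
    by (induct n_as) (auto simp: prod_eq_iff)
  have "count (mset (map snd n_as)) a = count (mset (diag_mat U)) a" for a
  proof -
    have "count (mset (map snd n_as)) a = sum_list (map fst (filter (\<lambda>na. snd na = a) n_as))"
      by (subst (2) n_as) (induct n_as, auto)
    then show ?thesis
      using mult by simp
  qed
  then show "mset (map snd n_as) = mset (diag_mat U)"
    by (simp add: multiset_eqI)
qed

lemma similar_mat_diag_upper_triangular:
  fixes U :: "complex mat"
  assumes U: "U \<in> carrier_mat n n" and ut: "upper_triangular U"
    and dist: "distinct (diag_mat U)" and bs: "mset bs = mset (diag_mat U)"
  shows "similar_mat U (mat_diag n (\<lambda>i. bs ! i))"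
proof -
  obtain n_as where jnf: "jordan_nf U n_as"
    using jordan_nf_exists[OF U char_poly_upper_triangular[OF U ut]] ..
  define cs where "cs = map snd n_as"
  note n_as = jordan_nf_distinct_diag[OF U ut dist jnf, folded cs_def]
  have cs_bs: "mset cs = mset bs"
    using n_as(2) bs by simp
  have len_bs: "length bs = n"
    using bs U by (metis size_mset length_map length_upt diag_mat_def carrier_matD(1) diff_zero)
  have len_cs: "length cs = n"
    using cs_bs len_bs by (metis size_mset)
  from permutation_Ex_bij[OF cs_bs] obtain p where p: "bij_betw p {..<n} {..<n}"
    and cs_p: "\<forall>i<n. cs ! i = bs ! p i"
    using len_bs len_cs by auto
  have "jordan_matrix n_as = mat_diag n (\<lambda>i. bs ! p i)"
    unfolding n_as(1) jordan_matrix_all_ones len_cs using cs_p by (intro eq_matI) auto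
  then have "similar_mat U (mat_diag n (\<lambda>i. bs ! p i))"
    using jnf unfolding jordan_nf_def by simp
  then show ?thesis
    using similar_mat_trans similar_mat_diag_permute[OF p] by blast
qed

lemma upper_triangular_mult:
  fixes A B :: "'a :: comm_ring_1 mat"
  assumes A: "A \<in> carrier_mat n n" and B: "B \<in> carrier_mat n n"
    and uA: "upper_triangular A" and uB: "upper_triangular B"
  shows "upper_triangular (A * B)"
    and "j < n \<Longrightarrow> (A * B) $$ (j, j) = A $$ (j, j) * B $$ (j, j)"
proof -
  have vanish: "A $$ (i, k) * B $$ (k, j) = 0" if "i < n" "k < n" "k < i \<or> j < k" for i j k
    using that A B upper_triangularD[OF uA, of k i] upper_triangularD[OF uB, of j k] by auto
  show "upper_triangular (A * B)"
  proof
    fix i j assume ji: "j < i" and "i < dim_row (A * B)"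
    then have i: "i < n" using A by simp
    have "(A * B) $$ (i, j) = (\<Sum>k<n. A $$ (i, k) * B $$ (k, j))"
      by (rule index_mult_mat_sum[OF A B]) (use i ji in auto)
    also have "\<dots> = 0"
      using i ji by (intro sum.neutral ballI vanish) auto
    finally show "(A * B) $$ (i, j) = 0" .
  qed
  assume j: "j < n"
  have "(A * B) $$ (j, j) = (\<Sum>k<n. A $$ (j, k) * B $$ (k, j))"
    by (rule index_mult_mat_sum[OF A B j j])
  also have "\<dots> = (\<Sum>k<n. if k = j then A $$ (j, j) * B $$ (j, j) else 0)"
    using j by (intro sum.cong refl) (auto intro: vanish simp: neq_iff)
  finally show "(A * B) $$ (j, j) = A $$ (j, j) * B $$ (j, j)"
    using j by simp
qed

lemma mat_prod_list_Nil [simp]: "mat_prod_list r [] = 1\<^sub>m r"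
  by (simp add: mat_prod_list_def)

lemma mat_prod_list_Cons [simp]: "mat_prod_list r (A # As) = A * mat_prod_list r As"
  by (simp add: mat_prod_list_def)

lemma mat_prod_list_carrier:
  "set As \<subseteq> carrier_mat r r \<Longrightarrow> mat_prod_list r As \<in> carrier_mat r r"
  by (induct As) auto

lemma mat_prod_list_upper_triangular:
  assumes "set As \<subseteq> carrier_mat r r" and "\<forall>A\<in>set As. upper_triangular A"
  shows "upper_triangular (mat_prod_list r As) \<and>
    (\<forall>j<r. mat_prod_list r As $$ (j, j) = (\<Prod>A\<leftarrow>As. A $$ (j, j)))"
  using assms
proof (induct As)
  case (Cons A As)
  then have "A \<in> carrier_mat r r" "mat_prod_list r As \<in> carrier_mat r r"
    by (auto intro: mat_prod_list_carrier)
  with Cons show ?case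
    using upper_triangular_mult[of A r "mat_prod_list r As"] by auto
qed (auto simp: upper_triangular_def)

lemma mat_prod_list_replicate_one:
  assumes "set As \<subseteq> carrier_mat r r"
  shows "mat_prod_list r (replicate m (1\<^sub>m r) @ As) = mat_prod_list r As"
  using mat_prod_list_carrier[OF assms] by (induct m) auto

lemma GL_I:
  assumes "A \<in> carrier_mat r r" and "B \<in> carrier_mat r r" and "A * B = 1\<^sub>m r"
  shows "A \<in> GL r"
  using assms mat_mult_left_right_inverse[OF assms]
  by (auto simp: GL_def invertible_mat_def inverts_mat_def)

lemma inv_mat_eqI:
  assumes A: "A \<in> carrier_mat r r" and B: "B \<in> carrier_mat r r" and AB: "A * B = 1\<^sub>m r"
  shows "inv_mat r A = B"
proof -
  have BA: "B * A = 1\<^sub>m r"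
    by (rule mat_mult_left_right_inverse[OF A B AB])
  then have "\<exists>C. C \<in> carrier_mat r r \<and> A * C = 1\<^sub>m r \<and> C * A = 1\<^sub>m r"
    using B AB by blast
  then have C: "inv_mat r A \<in> carrier_mat r r" "A * inv_mat r A = 1\<^sub>m r"
    unfolding inv_mat_def by (metis (mono_tags, lifting) someI_ex)+
  have "inv_mat r A = (B * A) * inv_mat r A"
    using C by (simp add: BA)
  also have "\<dots> = B"
    using A B C by simp
  finally show ?thesis .
qed

lemma GL_iff_det:
  fixes A :: "complex mat"
  assumes A: "A \<in> carrier_mat r r"
  shows "A \<in> GL r \<longleftrightarrow> det A \<noteq> 0"
proof
  assume "A \<in> GL r"
  then obtain B where AB: "A * B = 1\<^sub>m r" and B: "B * A = 1\<^sub>m (dim_row B)"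
    unfolding GL_def invertible_mat_def inverts_mat_def by auto
  then have Bc: "B \<in> carrier_mat r r"
    using A by (metis carrier_matD(2) carrier_mat_triv index_mult_mat(3) index_one_mat(3))
  have "det A * det B = 1"
    using det_mult[OF A Bc] AB by simp
  then show "det A \<noteq> 0" by auto
next
  assume "det A \<noteq> 0"
  then obtain B where "B \<in> carrier_mat r r" "A * B = 1\<^sub>m r"
    using det_non_zero_imp_unit[OF A, of undefined] unfolding Units_def ring_mat_def by auto
  with A show "A \<in> GL r" by (rule GL_I)
qed

section \<open>Invariant subspaces\<close>

lemma mat_diag_invariant_subspace_annihilate:
  fixes b :: "nat \<Rightarrow> complex"
  assumes W: "is_subspace r W" and inv: "common_invariant {mat_diag r b} W"
    and w: "w \<in> W" and "finite S"
  shows "\<exists>v\<in>W. \<forall>t<r. v $ t = (\<Prod>l\<in>S. b t - b l) * w $ t"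
  using \<open>finite S\<close>
proof (induct S rule: finite_induct)
  case empty
  then show ?case using w by auto
next
  case (insert l S)
  then obtain v where v: "v \<in> W" and vt: "\<forall>t<r. v $ t = (\<Prod>l\<in>S. b t - b l) * w $ t"
    by auto
  have vc: "v \<in> carrier_vec r"
    using v W by (auto simp: is_subspace_def)
  define v' where "v' = mat_diag r b *\<^sub>v v + (- b l) \<cdot>\<^sub>v v"
  have "v' \<in> W"
    using W inv v unfolding v'_def is_subspace_def common_invariant_def by blast
  moreover have "v' $ t = (\<Prod>l\<in>insert l S. b t - b l) * w $ t" if "t < r" for t
    using that vc vt insert(1,2) mat_diag_mult_vec_index[OF vc that, of b]
    by (simp add: v'_def algebra_simps)
  ultimately show ?case by blast
qed

lemma mat_diag_invariant_subspace_unit_vec: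
  fixes b :: "nat \<Rightarrow> complex"
  assumes W: "is_subspace r W" and inv: "common_invariant {mat_diag r b} W"
    and b: "inj_on b {..<r}" and w: "w \<in> W" and k: "k < r" and wk: "w $ k \<noteq> 0"
  shows "unit_vec r k \<in> W"
proof -
  define S where "S = {..<r} - {k}"
  obtain v where v: "v \<in> W" and vt: "\<forall>t<r. v $ t = (\<Prod>l\<in>S. b t - b l) * w $ t"
    using mat_diag_invariant_subspace_annihilate[OF W inv w, of S] by (auto simp: S_def)
  have vc: "v \<in> carrier_vec r"
    using v W by (auto simp: is_subspace_def)
  define c where "c = (\<Prod>l\<in>S. b k - b l) * w $ k"
  have c: "c \<noteq> 0"
    using b k wk by (auto simp: c_def S_def inj_on_def)
  have "unit_vec r k = inverse c \<cdot>\<^sub>v v"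
  proof (rule eq_vecI)
    fix t assume "t < dim_vec (inverse c \<cdot>\<^sub>v v)"
    then have t: "t < r" using vc by simp
    show "unit_vec r k $ t = (inverse c \<cdot>\<^sub>v v) $ t"
    proof (cases "t = k")
      case False
      then have "(\<Prod>l\<in>S. b t - b l) = 0"
        using t by (auto simp: S_def)
      then show ?thesis
        using False t vt vc by (simp add: unit_vec_def)
    qed (use vt vc t c in \<open>auto simp: c_def field_simps\<close>)
  qed (use vc in simp)
  then show ?thesis
    using W v unfolding is_subspace_def by metis
qed

lemma subspace_eq_carrier_vec:
  assumes W: "is_subspace r W" and units: "\<forall>k<r. unit_vec r k \<in> W"
  shows "W = carrier_vec r"
proof
  show "W \<subseteq> carrier_vec r"
    using W by (simp add: is_subspace_def)
  have truncation: "vec r (\<lambda>t. if t < m then v $ t else 0) \<in> W" if "m \<le> r" for v m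
    using that
  proof (induct m)
    case 0
    then show ?case
      using W by (simp add: is_subspace_def zero_vec_def)
  next
    case (Suc m)
    have "vec r (\<lambda>t. if t < Suc m then v $ t else 0) =
        vec r (\<lambda>t. if t < m then v $ t else 0) + v $ m \<cdot>\<^sub>v unit_vec r m"
      by (rule eq_vecI) (auto simp: unit_vec_def less_Suc_eq)
    then show ?case
      using Suc W units by (simp add: is_subspace_def)
  qed
  show "carrier_vec r \<subseteq> W"
  proof
    fix v :: "complex vec" assume "v \<in> carrier_vec r"
    then have "v = vec r (\<lambda>t. if t < r then v $ t else 0)"
      by (intro eq_vecI) auto
    with truncation[of r v] show "v \<in> W" by simp
  qed
qed

lemma upper_triangular_eigenvector_last_coord:
  fixes U :: "'a :: idom mat"
  assumes U: "U \<in> carrier_mat n n" and ut: "upper_triangular U" and v: "v \<in> carrier_vec n"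
    and eig: "U *\<^sub>v v = c \<cdot>\<^sub>v v" and s: "s < n" and vs: "v $ s \<noteq> 0"
    and last: "\<forall>t. s < t \<and> t < n \<longrightarrow> v $ t = 0"
  shows "U $$ (s, s) = c"
proof -
  have "(U *\<^sub>v v) $ s = (\<Sum>t<n. U $$ (s, t) * v $ t)"
    by (rule index_mult_mat_vec_sum[OF U v s])
  also have "\<dots> = (\<Sum>t<n. if t = s then U $$ (s, s) * v $ s else 0)"
    using U s last upper_triangularD[OF ut, of _ s] by (intro sum.cong refl) (auto simp: neq_iff)
  finally have "c * v $ s = U $$ (s, s) * v $ s"
    using eig s v by simp
  then show ?thesis
    using vs by simp
qed

lemma cyclic_invariant_subspace_pred:
  fixes U P Q :: "complex mat" and b :: "nat \<Rightarrow> complex"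
  assumes W: "is_subspace r W" and inv: "common_invariant {mat_diag r b, P} W"
    and b: "inj_on b {..<r}"
    and U: "U \<in> carrier_mat r r" "upper_triangular U"
    and U_diag: "\<forall>s<r. U $$ (s, s) = b (Suc s mod r)"
    and P: "P \<in> carrier_mat r r" and Q: "Q \<in> carrier_mat r r" and QP: "Q * P = 1\<^sub>m r"
    and UP: "U * P = P * mat_diag r b"
    and j: "j < r" "unit_vec r j \<in> W" and s: "s < r" "Suc s mod r = j"
  shows "unit_vec r s \<in> W"
proof -
  \<comment> \<open>\<open>P e\<^sub>j\<close> is an eigenvector of the upper triangular \<open>U\<close> for \<open>b j\<close>, so its last nonzero
    coordinate \<open>s'\<close> has \<open>U $$ (s', s') = b j\<close>, which pins \<open>s'\<close> down as the cyclic predecessor of \<open>j\<close>.\<close>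
  define v where "v = P *\<^sub>v unit_vec r j"
  have vW: "v \<in> W" and vc: "v \<in> carrier_vec r"
    using inv j P by (auto simp: v_def common_invariant_def)
  have "Q *\<^sub>v v = unit_vec r j"
    using Q P QP by (simp add: v_def flip: assoc_mult_mat_vec[of _ r r _ r])
  then have "(Q *\<^sub>v v) $ j = 1"
    using j(1) by simp
  then have "v \<noteq> 0\<^sub>v r"
    using Q j(1) scalar_prod_right_zero[of "row Q j" r] by auto
  then obtain t where "t < r" "v $ t \<noteq> 0"
    using vc by (metis eq_vecI carrier_vecD index_zero_vec)
  define s' where "s' = Max {t. t < r \<and> v $ t \<noteq> 0}"
  have s': "s' < r" "v $ s' \<noteq> 0" and last: "\<forall>t. s' < t \<and> t < r \<longrightarrow> v $ t = 0"
    using Max_in[of "{t. t < r \<and> v $ t \<noteq> 0}"] Max_ge[of "{t. t < r \<and> v $ t \<noteq> 0}"]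
      \<open>t < r\<close> \<open>v $ t \<noteq> 0\<close> unfolding s'_def[symmetric] by fastforce+
  have "mat_diag r b *\<^sub>v unit_vec r j = b j \<cdot>\<^sub>v unit_vec r j"
    using j(1) by (intro eq_vecI) (auto simp: mat_diag_mult_vec_index)
  then have "U *\<^sub>v v = b j \<cdot>\<^sub>v v"
  proof -
    have "U *\<^sub>v v = (U * P) *\<^sub>v unit_vec r j"
      using U P by (simp add: v_def)
    also have "\<dots> = P *\<^sub>v (mat_diag r b *\<^sub>v unit_vec r j)"
      using P by (simp add: UP assoc_mult_mat_vec[of _ r r _ r])
    also have "\<dots> = b j \<cdot>\<^sub>v v"
      using P by (simp add: \<open>mat_diag r b *\<^sub>v unit_vec r j = b j \<cdot>\<^sub>v unit_vec r j\<close> v_def mult_mat_vec)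
    finally show ?thesis .
  qed
  then have "b (Suc s' mod r) = b j"
    using upper_triangular_eigenvector_last_coord[OF U vc _ s' last] U_diag s'(1) by simp
  then have "Suc s' mod r = Suc s mod r"
    using b s' j(1) s by (auto dest: inj_onD)
  then have "s' = s"
    using s'(1) s(1) by (auto simp: mod_Suc split: if_splits)
  then show ?thesis
    using mat_diag_invariant_subspace_unit_vec[OF W _ b vW s'] inv
    by (auto simp: common_invariant_def)
qed

lemma cyclic_invariant_subspace_trivial:
  fixes U P Q :: "complex mat" and b :: "nat \<Rightarrow> complex"
  assumes W: "is_subspace r W" and inv: "common_invariant {mat_diag r b, P} W"
    and b: "inj_on b {..<r}"
    and U: "U \<in> carrier_mat r r" "upper_triangular U"
    and U_diag: "\<forall>s<r. U $$ (s, s) = b (Suc s mod r)"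
    and P: "P \<in> carrier_mat r r" and Q: "Q \<in> carrier_mat r r" and QP: "Q * P = 1\<^sub>m r"
    and UP: "U * P = P * mat_diag r b"
  shows "W = {0\<^sub>v r} \<or> W = carrier_vec r"
proof (cases "W = {0\<^sub>v r}")
  case False
  then obtain w where w: "w \<in> W" "w \<noteq> 0\<^sub>v r"
    using W by (auto simp: is_subspace_def)
  moreover have "w \<in> carrier_vec r"
    using w W by (auto simp: is_subspace_def)
  ultimately obtain k where k: "k < r" "w $ k \<noteq> 0"
    by (metis eq_vecI carrier_vecD index_zero_vec)
  note pred = cyclic_invariant_subspace_pred[OF W inv b U U_diag P Q QP UP]
  have "unit_vec r k \<in> W"
    using mat_diag_invariant_subspace_unit_vec[OF W _ b w(1) k] inv
    by (auto simp: common_invariant_def)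
  have "unit_vec r t \<in> W" if "t \<le> k" for t
    using that
  proof (induct rule: inc_induct)
    case (step t)
    then show ?case using pred[of "Suc t" t] k(1) by simp
  qed fact
  then have "unit_vec r 0 \<in> W"
    by simp
  then have last: "unit_vec r (r - 1) \<in> W"
    using pred[of 0 "r - 1"] k(1) by simp
  have "unit_vec r t \<in> W" if "t \<le> r - 1" for t
    using that
  proof (induct rule: inc_induct)
    case (step t)
    then show ?case using pred[of "Suc t" t] by simp
  qed (fact last)
  then show ?thesis
    using subspace_eq_carrier_vec[OF W] by fastforce
qed simp

section \<open>Solving (D, P) X = 1 irreducibly\<close>

lemma commutator_mult_eq_one:
  fixes D Di P Q X :: "complex mat"
  assumes D: "D \<in> carrier_mat r r" and Di: "Di \<in> carrier_mat r r" and DDi: "D * Di = 1\<^sub>m r"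
    and P: "P \<in> carrier_mat r r" and Q: "Q \<in> carrier_mat r r" and PQ: "P * Q = 1\<^sub>m r"
    and X: "X \<in> carrier_mat r r" and XD: "X * D = P * D * Q"
  shows "commutator r D P * X = 1\<^sub>m r"
proof -
  have "X = X * D * Di"
    using X D Di DDi by simp
  then have "commutator r D P * X = D * P * Di * Q * (P * D * Q * Di)"
    unfolding commutator_def inv_mat_eqI[OF D Di DDi] inv_mat_eqI[OF P Q PQ] XD by simp
  also have "\<dots> = 1\<^sub>m r"
  proof -
    have cancel: "Q * (P * Z) = Z" "Di * (D * Z) = Z" "P * (Q * Z) = Z"
      if "Z \<in> carrier_mat r r" for Z
      using that D Di P Q PQ mat_mult_left_right_inverse[OF D Di DDi]
        mat_mult_left_right_inverse[OF P Q PQ]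
      by (simp_all flip: assoc_mult_mat[of _ r r _ r _ r])
    show ?thesis
      using D Di P Q
      by (simp add: cancel DDi assoc_mult_mat[of _ r r _ r _ r] mult_carrier_mat[of _ r r _ r])
  qed
  finally show ?thesis .
qed

lemma upper_triangular_mat_diag: "upper_triangular (mat_diag n f)"
  by auto

lemma commutator_factorization:
  fixes X :: "complex mat" and b :: "nat \<Rightarrow> complex"
  assumes X: "X \<in> carrier_mat r r" "upper_triangular X"
    and b_inj: "inj_on b {..<r}" and b_nz: "\<forall>j<r. b j \<noteq> 0"
    and X_diag: "\<forall>j<r. X $$ (j, j) * b j = b (Suc j mod r)"
  shows "\<exists>P\<in>GL r. commutator r (mat_diag r b) P * X = 1\<^sub>m r \<and>
    (\<forall>W. is_subspace r W \<and> common_invariant {mat_diag r b, P} W \<longrightarrow>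
      W = {0\<^sub>v r} \<or> W = carrier_vec r)"
proof -
  define D where "D = mat_diag r b"
  have D: "D \<in> carrier_mat r r"
    by (simp add: D_def)
  define U where "U = X * D"
  have U: "U \<in> carrier_mat r r"
    using X D by (simp add: U_def)
  note U_mult = upper_triangular_mult[OF X(1) D X(2), unfolded D_def,
      OF upper_triangular_mat_diag, folded D_def U_def]
  have U_diag: "\<forall>s<r. U $$ (s, s) = b (Suc s mod r)"
    using U_mult(2) X_diag by (simp add: D_def)
  have diag_U: "diag_mat U = rotate1 (map b [0..<r])"
    using U U_diag by (intro nth_equalityI) (auto simp: diag_mat_def nth_rotate1)
  have "distinct (diag_mat U)"
    using b_inj by (simp add: diag_U distinct_map atLeast0LessThan lessThan_def)
  moreover have "mset (map b [0..<r]) = mset (diag_mat U)"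
    unfolding diag_U by (cases "map b [0..<r]") simp_all
  ultimately have "similar_mat U (mat_diag r (\<lambda>i. map b [0..<r] ! i))"
    by (rule similar_mat_diag_upper_triangular[OF U U_mult(1)])
  also have "mat_diag r (\<lambda>i. map b [0..<r] ! i) = D"
    by (intro eq_matI) (simp_all add: D_def)
  finally obtain P Q where PQ: "{U, D, P, Q} \<subseteq> carrier_mat r r" "P * Q = 1\<^sub>m r" "Q * P = 1\<^sub>m r"
    and U_sim: "U = P * D * Q"
    using U by (metis similar_matD carrier_matD(1) insert_subset)
  then have P: "P \<in> carrier_mat r r" and Q: "Q \<in> carrier_mat r r"
    by simp_all
  have "commutator r D P * X = 1\<^sub>m r"
  proof (rule commutator_mult_eq_one[OF D _ _ P Q PQ(2) X(1) U_sim[unfolded U_def]])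
    show "mat_diag r (\<lambda>j. inverse (b j)) \<in> carrier_mat r r"
      by simp
    show "D * mat_diag r (\<lambda>j. inverse (b j)) = 1\<^sub>m r"
      unfolding D_def by (rule mat_diag_mult_inverse[OF b_nz])
  qed
  moreover have "P \<in> GL r"
    using P Q PQ(2) by (rule GL_I)
  moreover have "U * P = P * D"
    using P Q D PQ(3)
    by (simp add: U_sim assoc_mult_mat[of _ r r _ r _ r] mult_carrier_mat[of _ r r _ r])
  then have "W = {0\<^sub>v r} \<or> W = carrier_vec r"
    if "is_subspace r W" and "common_invariant {D, P} W" for W
    using cyclic_invariant_subspace_trivial[OF that[unfolded D_def] b_inj U U_mult(1) U_diag P Q PQ(3)]
    by (simp add: D_def)
  ultimately show ?thesis
    unfolding D_def by blast
qed

lemma commutator_factorization_generic: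
  fixes X :: "complex mat" and d :: "nat \<Rightarrow> complex"
  assumes X: "X \<in> carrier_mat r r" "upper_triangular X"
    and X_diag: "\<forall>j<r. X $$ (j, j) = d j"
    and nz: "\<forall>j<r. d j \<noteq> 0"
    and prod_one: "(\<Prod>j<r. d j) = 1"
    and generic: "\<forall>j k. j < k \<and> k < r \<longrightarrow> (\<Prod>l\<in>{j..<k}. d l) \<noteq> 1"
  shows "\<exists>D\<in>GL r. \<exists>P\<in>GL r. commutator r D P * X = 1\<^sub>m r \<and>
    (\<forall>W. is_subspace r W \<and> common_invariant {D, P} W \<longrightarrow> W = {0\<^sub>v r} \<or> W = carrier_vec r)"
proof -
  \<comment> \<open>Genericity makes \<open>b\<close> injective on \<open>{..<r}\<close>; \<open>b r = b 0 = 1\<close> closes the cycle.\<close>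
  define b where "b j = (\<Prod>l<j. d l)" for j
  have b_nz: "b j \<noteq> 0" if "j \<le> r" for j
    using that nz by (simp add: b_def)
  have b_split: "b k = b j * (\<Prod>l\<in>{j..<k}. d l)" if "j \<le> k" for j k
  proof -
    have split: "{..<k} = {..<j} \<union> {j..<k}"
      using that by auto
    show ?thesis
      unfolding b_def split by (rule prod.union_disjoint) auto
  qed
  have "b j \<noteq> b k" if "j < k" "k < r" for j k
    using b_split[of j k] b_nz[of j] generic that by auto
  then have b_inj: "inj_on b {..<r}"
    by (intro inj_onI) (metis lessThan_iff neq_iff)
  have b_step: "\<forall>j<r. X $$ (j, j) * b j = b (Suc j mod r)"
  proof (intro allI impI)
    fix j assume j: "j < r"
    have "X $$ (j, j) * b j = b (Suc j)"
      using j X_diag by (simp add: b_def mult.commute)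
    also have "b (Suc j) = b (Suc j mod r)"
      using j prod_one by (cases "Suc j = r") (simp_all add: b_def)
    finally show "X $$ (j, j) * b j = b (Suc j mod r)" .
  qed
  obtain P where "P \<in> GL r" and "commutator r (mat_diag r b) P * X = 1\<^sub>m r"
    and "\<forall>W. is_subspace r W \<and> common_invariant {mat_diag r b, P} W \<longrightarrow>
      W = {0\<^sub>v r} \<or> W = carrier_vec r"
    using commutator_factorization[OF X b_inj _ b_step] b_nz by auto
  moreover have "mat_diag r b \<in> GL r"
    using mat_diag_mult_inverse[of r b] b_nz
    by (intro GL_I[of _ r "mat_diag r (\<lambda>j. inverse (b j))"]) auto
  ultimately show ?thesis by blast
qed

section \<open>Triangular representatives of the conjugacy classes\<close>

lemma eig_list_char_poly:
  fixes M :: "complex mat"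
  assumes "M \<in> carrier_mat r r"
  shows "char_poly M = (\<Prod>a\<leftarrow>eig_list M. [:- a, 1:])"
proof -
  have "\<exists>as. char_poly M = (\<Prod>a\<leftarrow>as. [:- a, 1:])"
    using char_poly_factorized[OF assms] by blast
  then show ?thesis
    unfolding eig_list_def by (rule someI_ex)
qed

lemma schur_triangular_eig_list:
  fixes M :: "complex mat"
  assumes M: "M \<in> carrier_mat r r"
  obtains T where "T \<in> carrier_mat r r" "upper_triangular T" "similar_mat M T"
    "diag_mat T = eig_list M"
proof -
  obtain T P Q where schur: "schur_decomposition M (eig_list M) = (T, P, Q)"
    by (metis prod_cases3)
  have wit: "similar_mat_wit M T P Q" and ut: "upper_triangular T" and diag: "diag_mat T = eig_list M"
    using schur_decomposition[OF M eig_list_char_poly[OF M] schur] by auto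
  have "T \<in> carrier_mat r r"
    by (rule similar_mat_witD2(5)[OF M wit])
  moreover have "similar_mat M T"
    using wit by (auto simp: similar_mat_def)
  ultimately show ?thesis
    using ut diag by (intro that)
qed

lemma det_eq_prod_eig_list:
  fixes M :: "complex mat"
  assumes M: "M \<in> carrier_mat r r"
  shows "det M = (\<Prod>l<r. eig_list M ! l)"
proof -
  obtain T where T: "T \<in> carrier_mat r r" "upper_triangular T" "similar_mat M T"
    and diag: "diag_mat T = eig_list M"
    using schur_triangular_eig_list[OF M] .
  have "det M = prod_list (diag_mat T)"
    using det_similar[OF T(3)] det_upper_triangular[OF T(2,1)] by simp
  also have "\<dots> = (\<Prod>l\<in>{0..<length (diag_mat T)}. diag_mat T ! l)"
    by (rule prod.list_conv_set_nth)
  also have "\<dots> = (\<Prod>l<r. eig_list M ! l)"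
    using T(1) unfolding diag[symmetric] by (simp add: diag_mat_def atLeast0LessThan)
  finally show ?thesis .
qed

lemma prod_eig_list_det:
  fixes M :: "nat \<Rightarrow> complex mat"
  assumes "\<forall>i<n. M i \<in> GL r"
  shows "(\<Prod>j<r. \<Prod>i<n. eig_list (M i) ! j) = (\<Prod>i<n. det (M i))"
proof -
  have "(\<Prod>j<r. \<Prod>i<n. eig_list (M i) ! j) = (\<Prod>i<n. \<Prod>j<r. eig_list (M i) ! j)"
    by (rule prod.swap)
  also have "\<dots> = (\<Prod>i<n. det (M i))"
  proof (rule prod.cong[OF refl])
    fix i assume "i \<in> {..<n}"
    then have "M i \<in> carrier_mat r r"
      using assms by (simp add: GL_def)
    then show "(\<Prod>j<r. eig_list (M i) ! j) = det (M i)"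
      by (rule det_eq_prod_eig_list[symmetric])
  qed
  finally show ?thesis .
qed

lemma prod_eig_list_nonzero:
  fixes M :: "nat \<Rightarrow> complex mat"
  assumes "\<forall>i<n. M i \<in> GL r"
  shows "\<forall>j<r. (\<Prod>i<n. eig_list (M i) ! j) \<noteq> 0"
proof (intro allI impI)
  fix j assume j: "j < r"
  have "eig_list (M i) ! j \<noteq> 0" if i: "i < n" for i
  proof
    assume zero: "eig_list (M i) ! j = 0"
    have Mc: "M i \<in> carrier_mat r r"
      using assms i by (simp add: GL_def)
    then have "det (M i) = (\<Prod>l<r. eig_list (M i) ! l)"
      by (rule det_eq_prod_eig_list)
    also have "\<dots> = 0"
      using zero j by (intro prod_zero) auto
    finally show False
      using assms i GL_iff_det[OF Mc] by simp
  qed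
  then show "(\<Prod>i<n. eig_list (M i) ! j) \<noteq> 0"
    by simp
qed

lemma mult_generic_interval:
  assumes "mult_generic r n M"
  shows "\<forall>j k. j < k \<and> k < r \<longrightarrow> (\<Prod>l\<in>{j..<k}. \<Prod>i<n. eig_list (M i) ! l) \<noteq> 1"
proof (intro allI impI)
  fix j k assume jk: "j < k \<and> k < r"
  then have m: "1 \<le> k - j \<and> k - j < r"
    by auto
  have "(\<Prod>i<n. \<Prod>l\<in>{j..<k}. eig_list (M i) ! l) \<noteq> 1"
    using assms[unfolded mult_generic_def, rule_format, OF m, of "\<lambda>_. {j..<k}"] jk by auto
  then show "(\<Prod>l\<in>{j..<k}. \<Prod>i<n. eig_list (M i) ! l) \<noteq> 1"
    by (simp add: prod.swap[of _ "{j..<k}"])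
qed

lemma triangular_conj_class_member:
  fixes M :: "complex mat"
  assumes M: "M \<in> GL r"
  obtains T where "T \<in> conj_class r M" "upper_triangular T" "diag_mat T = eig_list M"
proof -
  have Mc: "M \<in> carrier_mat r r"
    using M by (simp add: GL_def)
  obtain T where T: "T \<in> carrier_mat r r" "upper_triangular T" "similar_mat M T"
    "diag_mat T = eig_list M"
    using schur_triangular_eig_list[OF Mc] .
  have "det T \<noteq> 0"
    using M GL_iff_det[OF Mc] det_similar[OF T(3)] by simp
  then have "T \<in> conj_class r M"
    using GL_iff_det[OF T(1)] similar_mat_sym[OF T(3)] by (simp add: conj_class_def)
  then show ?thesis
    using T(2,4) by (rule that)
qed

lemma triangular_representatives:
  fixes M :: "nat \<Rightarrow> complex mat"
  assumes "\<forall>i<n. M i \<in> GL r"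
  obtains T where "\<forall>i<n. T i \<in> conj_class r (M i)"
    and "upper_triangular (mat_prod_list r (map T [0..<n]))"
    and "\<forall>j<r. mat_prod_list r (map T [0..<n]) $$ (j, j) = (\<Prod>i<n. eig_list (M i) ! j)"
proof -
  have "\<forall>i\<in>{..<n}. \<exists>T. T \<in> conj_class r (M i) \<and> upper_triangular T \<and> diag_mat T = eig_list (M i)"
    using assms triangular_conj_class_member by (metis lessThan_iff)
  then obtain T where T: "\<forall>i\<in>{..<n}. T i \<in> conj_class r (M i) \<and> upper_triangular (T i) \<and>
      diag_mat (T i) = eig_list (M i)"
    by (rule bchoice[elim_format]) blast
  then have Tc: "set (map T [0..<n]) \<subseteq> carrier_mat r r"
    by (auto simp: conj_class_def GL_def)
  have diag: "T i $$ (j, j) = eig_list (M i) ! j" if "i < n" "j < r" for i j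
  proof -
    have "T i \<in> carrier_mat r r"
      using Tc that(1) by auto
    then have "T i $$ (j, j) = diag_mat (T i) ! j"
      using that(2) by (simp add: diag_mat_def)
    then show ?thesis
      using T that(1) by simp
  qed
  have prod_diag: "(\<Prod>A\<leftarrow>map T [0..<n]. A $$ (j, j)) = (\<Prod>i<n. eig_list (M i) ! j)"
    if "j < r" for j
  proof -
    have "(\<Prod>A\<leftarrow>map T [0..<n]. A $$ (j, j)) = (\<Prod>i\<in>set [0..<n]. T i $$ (j, j))"
      by (subst prod.distinct_set_conv_list) (simp_all add: comp_def)
    also have "\<dots> = (\<Prod>i<n. eig_list (M i) ! j)"
      using diag that by (intro prod.cong) auto
    finally show ?thesis .
  qed
  have "upper_triangular (mat_prod_list r (map T [0..<n])) \<and>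
      (\<forall>j<r. mat_prod_list r (map T [0..<n]) $$ (j, j) = (\<Prod>A\<leftarrow>map T [0..<n]. A $$ (j, j)))"
    using T by (intro mat_prod_list_upper_triangular[OF Tc]) auto
  then show ?thesis
    using T prod_diag by (intro that) auto
qed

lemma commutator_padding:
  assumes "g \<ge> 1" and Ts: "set Ts \<subseteq> carrier_mat r r" and D: "D \<in> GL r" and P: "P \<in> GL r"
    and comm: "commutator r D P * mat_prod_list r Ts = 1\<^sub>m r"
    and irreducible: "\<forall>W. is_subspace r W \<and> common_invariant {D, P} W \<longrightarrow>
      W = {0\<^sub>v r} \<or> W = carrier_vec r"
  shows "\<exists>A B. (\<forall>k<g. A k \<in> GL r \<and> B k \<in> GL r) \<and>
    mat_prod_list r (map (\<lambda>k. commutator r (A k) (B k)) [0..<g] @ Ts) = 1\<^sub>m r \<and>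
    (\<forall>W. is_subspace r W \<and> common_invariant (A ` {..<g} \<union> B ` {..<g} \<union> S) W \<longrightarrow>
      W = {0\<^sub>v r} \<or> W = carrier_vec r)"
proof -
  define A where "A k = (if k = 0 then D else 1\<^sub>m r)" for k :: nat
  define B where "B k = (if k = 0 then P else 1\<^sub>m r)" for k :: nat
  have "commutator r (1\<^sub>m r) (1\<^sub>m r) = 1\<^sub>m r"
    using inv_mat_eqI[of "1\<^sub>m r" r "1\<^sub>m r"] by (simp add: commutator_def)
  then have "map (\<lambda>k. commutator r (A k) (B k)) [1..<g] = map (\<lambda>_. 1\<^sub>m r) [1..<g]"
    by (intro map_cong) (auto simp: A_def B_def)
  then have "map (\<lambda>k. commutator r (A k) (B k)) [0..<g] = commutator r D P # replicate (g - 1) (1\<^sub>m r)"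
    using assms(1) by (simp add: upt_conv_Cons map_replicate_const A_def B_def del: upt_Suc)
  then have "mat_prod_list r (map (\<lambda>k. commutator r (A k) (B k)) [0..<g] @ Ts) = 1\<^sub>m r"
    using Ts comm by (simp add: mat_prod_list_replicate_one)
  moreover have "\<forall>k<g. A k \<in> GL r \<and> B k \<in> GL r"
    using D P GL_I[of "1\<^sub>m r" r "1\<^sub>m r"] by (simp add: A_def B_def)
  moreover have "D \<in> A ` {..<g}" and "P \<in> B ` {..<g}"
    using assms(1) by (auto simp: A_def B_def intro!: image_eqI[of _ _ 0])
  then have "common_invariant {D, P} W"
    if "common_invariant (A ` {..<g} \<union> B ` {..<g} \<union> S) W" for W
    using that by (auto simp: common_invariant_def)
  ultimately show ?thesis
    using irreducible by (intro exI[of _ A] exI[of _ B] conjI) blast+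
qed

theorem mainTheorem2:
  fixes n g r :: nat and M :: "nat \<Rightarrow> complex mat"
  assumes "n \<ge> 1" and "g \<ge> 1" and "r \<ge> 1"
    and M_GL: "\<forall>i<n. M i \<in> GL r"
    and generic: "mult_generic r n M"
    and det_one: "(\<Prod>i<n. det (M i)) = 1"
    and g1: "g = 1 \<longrightarrow> (\<exists>i<n. attached_partition (M i) \<noteq> {#r#})"
  shows "\<exists>A B T :: nat \<Rightarrow> complex mat.
     (\<forall>k<g. A k \<in> GL r \<and> B k \<in> GL r) \<and>
     (\<forall>i<n. T i \<in> conj_class r (M i)) \<and>
     mat_prod_list r (map (\<lambda>k. commutator r (A k) (B k)) [0..<g] @ map T [0..<n]) = 1\<^sub>m r \<and>
     (\<forall>W. is_subspace r W \<and>
          common_invariant (A ` {..<g} \<union> B ` {..<g} \<union> T ` {..<n}) W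
          \<longrightarrow> W = {0\<^sub>v r} \<or> W = carrier_vec r)"
proof -
  obtain T where T: "\<forall>i<n. T i \<in> conj_class r (M i)"
    and X_ut: "upper_triangular (mat_prod_list r (map T [0..<n]))"
    and X_diag: "\<forall>j<r. mat_prod_list r (map T [0..<n]) $$ (j, j) = (\<Prod>i<n. eig_list (M i) ! j)"
    using triangular_representatives[OF M_GL] .
  have Tc: "set (map T [0..<n]) \<subseteq> carrier_mat r r"
    using T by (auto simp: conj_class_def GL_def)
  obtain D P where "D \<in> GL r" "P \<in> GL r"
    and "commutator r D P * mat_prod_list r (map T [0..<n]) = 1\<^sub>m r"
    and "\<forall>W. is_subspace r W \<and> common_invariant {D, P} W \<longrightarrow> W = {0\<^sub>v r} \<or> W = carrier_vec r"
    using commutator_factorization_generic[OF mat_prod_list_carrier[OF Tc] X_ut X_diag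
        prod_eig_list_nonzero[OF M_GL] prod_eig_list_det[OF M_GL, unfolded det_one]
        mult_generic_interval[OF generic]] by blast
  from commutator_padding[OF \<open>g \<ge> 1\<close> Tc this, of "T ` {..<n}"] obtain A B
    where "\<forall>k<g. A k \<in> GL r \<and> B k \<in> GL r"
      and "mat_prod_list r (map (\<lambda>k. commutator r (A k) (B k)) [0..<g] @ map T [0..<n]) = 1\<^sub>m r"
      and "\<forall>W. is_subspace r W \<and> common_invariant (A ` {..<g} \<union> B ` {..<g} \<union> T ` {..<n}) W \<longrightarrow>
        W = {0\<^sub>v r} \<or> W = carrier_vec r"
    by blast
  with T show ?thesis
    by (intro exI[of _ A] exI[of _ B] exI[of _ T] conjI)
qed

end
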